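(* Let $K$ be an idempotent semifield. Then every finite division semialgebra $D$ over $K$ is archimedean, i.e. for every $x\in D$ there exists $y\in K$ with $x+y=y$.
   Context: A (possibly noncommutative) semiring has a commutative associative addition with identity $0$ and an associative multiplication with identity $1$, satisfying both distributive laws; a division semiring is one in which every nonzero element is invertible. A semifield is a commutative division semiring; it is idempotent if $x+x=x$ for all $x$. A division semialgebra over a semifield $K$ is a division semiring $D$ with an injective homomorphism from $K$ into the center of $D$ (identify $K$ with its image); it is finite if $D$ is finitely generated as a left $K$-semimodule. *)

theory Defs
  imports Main
begin

text \<open>Semirings in the sense of the paper: commutative monoid under addition,
monoid under multiplication, both distributive laws (no absorbing zero, no 0 \<noteq> 1).
This is exactly the sort {semiring, comm_monoid_add, monoid_mult}.\<close>

definition division_semiring :: "'a::{semiring,comm_monoid_add,monoid_mult} itself \<Rightarrow> bool" where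
  "division_semiring _ \<longleftrightarrow> (\<forall>x::'a. x \<noteq> 0 \<longrightarrow> (\<exists>y. x * y = 1 \<and> y * x = 1))"

definition semifield :: "'a::{semiring,comm_monoid_add,monoid_mult} itself \<Rightarrow> bool" where
  "semifield T \<longleftrightarrow> division_semiring T \<and> (\<forall>x y::'a. x * y = y * x)"

definition idempotent_add :: "'a::{semiring,comm_monoid_add,monoid_mult} itself \<Rightarrow> bool" where
  "idempotent_add _ \<longleftrightarrow> (\<forall>x::'a. x + x = x)"

definition semiring_hom ::
  "('k::{semiring,comm_monoid_add,monoid_mult} \<Rightarrow> 'd::{semiring,comm_monoid_add,monoid_mult}) \<Rightarrow> bool" where
  "semiring_hom f \<longleftrightarrow> (\<forall>a b. f (a + b) = f a + f b) \<and> (\<forall>a b. f (a * b) = f a * f b)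
      \<and> f 0 = 0 \<and> f 1 = 1"

definition division_semialgebra ::
  "('k::{semiring,comm_monoid_add,monoid_mult} \<Rightarrow> 'd::{semiring,comm_monoid_add,monoid_mult}) \<Rightarrow> bool" where
  "division_semialgebra f \<longleftrightarrow> division_semiring TYPE('d) \<and> semiring_hom f \<and> inj f
      \<and> (\<forall>k d. f k * d = d * f k)"

text \<open>Finite: D finitely generated as a left K-semimodule (action k\<cdot>x = f k * x).\<close>
definition finite_semialgebra ::
  "('k::{semiring,comm_monoid_add,monoid_mult} \<Rightarrow> 'd::{semiring,comm_monoid_add,monoid_mult}) \<Rightarrow> bool" where
  "finite_semialgebra f \<longleftrightarrow> (\<exists>S::'d set. finite S \<and>
      (\<forall>x. \<exists>c::'d \<Rightarrow> 'k. x = (\<Sum>s\<in>S. f (c s) * s)))"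

definition archimedean_over ::
  "('k::{semiring,comm_monoid_add,monoid_mult} \<Rightarrow> 'd::{semiring,comm_monoid_add,monoid_mult}) \<Rightarrow> bool" where
  "archimedean_over f \<longleftrightarrow> (\<forall>x::'d. \<exists>y::'k. x + f y = f y)"

end

theory Submission
  imports Defs
begin

text \<open>Since \<open>1 + 1 = 1\<close> in \<open>K\<close>, also \<open>1 + 1 = 1\<close> in \<open>D\<close>, so \<open>D\<close> is idempotent and
\<open>a \<preceq> b \<longleftrightarrow> a + b = b\<close> is a preorder compatible with sums and products. If \<open>g\<close> is the sum
of a finite generating set, every \<open>x\<close> lies below some \<open>f k * g\<close>. Applying this to \<open>x = g * g\<close>
and cancelling the invertible \<open>g\<close> on the right gives \<open>g \<preceq> f k'\<close>, whence
\<open>x \<preceq> f k * f k' = f (k * k')\<close>.\<close>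

definition add_le :: "'a::{semiring,comm_monoid_add,monoid_mult} \<Rightarrow> 'a \<Rightarrow> bool"
    (infix "\<preceq>" 50) where
  "a \<preceq> b \<longleftrightarrow> a + b = b"

lemma zero_add_le [simp]: "0 \<preceq> a"
  by (simp add: add_le_def)

lemma add_le_refl: "(\<forall>x::'a::{semiring,comm_monoid_add,monoid_mult}. x + x = x) \<Longrightarrow> a \<preceq> (a::'a)"
  by (simp add: add_le_def)

lemma add_le_trans [trans]: "a \<preceq> b \<Longrightarrow> b \<preceq> c \<Longrightarrow> a \<preceq> c"
  unfolding add_le_def by (metis add.assoc)

lemma add_le_mult_left: "a \<preceq> b \<Longrightarrow> c * a \<preceq> c * b"
  unfolding add_le_def by (metis distrib_left)

lemma add_le_mult_right: "a \<preceq> b \<Longrightarrow> a * c \<preceq> b * c"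
  unfolding add_le_def by (metis distrib_right)

lemma add_le_add: "a \<preceq> b \<Longrightarrow> c \<preceq> d \<Longrightarrow> a + c \<preceq> b + d"
  unfolding add_le_def by (metis add.assoc add.left_commute)

lemma add_le_sum:
  assumes "finite S" and "\<And>s. s \<in> S \<Longrightarrow> a s \<preceq> b s"
  shows "sum a S \<preceq> sum b S"
  using assms by (induction S rule: finite_induct) (auto intro: add_le_add)

lemma member_add_le_sum:
  fixes S :: "'a::{semiring,comm_monoid_add,monoid_mult} set"
  assumes "finite S" and "s \<in> S" and "\<forall>x::'a. x + x = x"
  shows "s \<preceq> \<Sum>S"
proof -
  have "\<Sum>S = s + \<Sum>(S - {s})"
    using assms(1,2) sum.remove by fastforce
  then show ?thesis
    using assms(3) unfolding add_le_def by (metis add.assoc)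
qed

text \<open>Only an inequality: without \<open>0 * g = 0\<close> the empty sum breaks distributivity.\<close>
lemma sum_mult_add_le:
  fixes h :: "'b \<Rightarrow> 'a::{semiring,comm_monoid_add,monoid_mult}"
  assumes "finite S" and "\<forall>x::'a. x + x = x"
  shows "(\<Sum>s\<in>S. h s * g) \<preceq> sum h S * g"
  using assms(1)
proof (induction S rule: finite_induct)
  case (insert s F)
  have "h s * g + (\<Sum>s\<in>F. h s * g) \<preceq> h s * g + sum h F * g"
    using insert.IH assms(2) by (simp add: add_le_add add_le_refl)
  with insert.hyps show ?case
    by (simp add: distrib_right)
qed simp

lemma semiring_hom_sum:
  assumes "semiring_hom f" and "finite S"
  shows "(\<Sum>s\<in>S. f (c s)) = f (sum c S)"
  using assms(2) by (induction S rule: finite_induct) (use assms(1) in \<open>simp_all add: semiring_hom_def\<close>)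

lemma idempotent_add_image:
  fixes f :: "'k::{semiring,comm_monoid_add,monoid_mult} \<Rightarrow> 'd::{semiring,comm_monoid_add,monoid_mult}"
  assumes "semiring_hom f" and "idempotent_add TYPE('k)"
  shows "\<forall>x::'d. x + x = x"
proof
  fix x :: 'd
  have "(1::'d) + 1 = f (1 + (1::'k))"
    using assms(1) by (simp add: semiring_hom_def)
  also have "\<dots> = 1"
    using assms by (simp add: idempotent_add_def semiring_hom_def)
  finally have "x * (1 + 1) = x"
    by simp
  then show "x + x = x"
    by (simp add: distrib_left)
qed

lemma finitely_generated_bounded:
  fixes f :: "'k::{semiring,comm_monoid_add,monoid_mult} \<Rightarrow> 'd::{semiring,comm_monoid_add,monoid_mult}"
  assumes "semiring_hom f" and "\<forall>x::'d. x + x = x" and "finite_semialgebra f"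
  obtains g where "\<And>x. \<exists>k. x \<preceq> f k * g"
proof -
  obtain S :: "'d set" where S: "finite S" "\<And>x. \<exists>c. x = (\<Sum>s\<in>S. f (c s) * s)"
    using assms(3) by (auto simp: finite_semialgebra_def)
  have "\<exists>k. x \<preceq> f k * \<Sum>S" for x
  proof -
    obtain c where c: "x = (\<Sum>s\<in>S. f (c s) * s)"
      using S(2) by blast
    have "x \<preceq> (\<Sum>s\<in>S. f (c s) * \<Sum>S)"
      unfolding c using S(1) assms(2)
      by (intro add_le_sum add_le_mult_left member_add_le_sum) auto
    also have "\<dots> \<preceq> f (sum c S) * \<Sum>S"
      using sum_mult_add_le[OF S(1) assms(2), of "\<lambda>s. f (c s)"]
      by (simp add: semiring_hom_sum[OF assms(1) S(1)])
    finally show ?thesis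
      by blast
  qed
  then show thesis
    by (rule that)
qed

lemma archimedean_if_bounded:
  fixes f :: "'k::{semiring,comm_monoid_add,monoid_mult} \<Rightarrow> 'd::{semiring,comm_monoid_add,monoid_mult}"
  assumes "semiring_hom f" and "division_semiring TYPE('d)"
    and bounded: "\<And>x. \<exists>k. x \<preceq> f k * g"
  shows "archimedean_over f"
proof -
  obtain k' where k': "g \<preceq> f k'"
  proof (cases "g = 0")
    case True
    then show ?thesis
      using that by simp
  next
    case False
    then obtain h where h: "g * h = 1"
      using assms(2) by (auto simp: division_semiring_def)
    obtain k where "g * g \<preceq> f k * g"
      using bounded by blast
    then have "g * g * h \<preceq> f k * g * h"
      by (rule add_le_mult_right)
    with h have "g \<preceq> f k"
      by (simp add: mult.assoc)
    then show ?thesis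
      by (rule that)
  qed
  show ?thesis
    unfolding archimedean_over_def
  proof
    fix x :: 'd
    obtain k where "x \<preceq> f k * g"
      using bounded by blast
    also have "\<dots> \<preceq> f k * f k'"
      using k' by (rule add_le_mult_left)
    finally have "x + f (k * k') = f (k * k')"
      using assms(1) by (simp add: add_le_def semiring_hom_def)
    then show "\<exists>y. x + f y = f y" ..
  qed
qed

theorem mainTheorem19:
  fixes f :: "'k::{semiring,comm_monoid_add,monoid_mult} \<Rightarrow> 'd::{semiring,comm_monoid_add,monoid_mult}"
  assumes "semifield TYPE('k)"
    and "idempotent_add TYPE('k)"
    and "division_semialgebra f"
    and "finite_semialgebra f"
  shows "archimedean_over f"
proof -
  have hom: "semiring_hom f" and div: "division_semiring TYPE('d)"
    using assms(3) by (auto simp: division_semialgebra_def)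
  have "\<forall>x::'d. x + x = x"
    using idempotent_add_image[OF hom assms(2)] .
  then obtain g where "\<And>x. \<exists>k. x \<preceq> f k * g"
    using finitely_generated_bounded[OF hom _ assms(4)] by blast
  then show ?thesis
    using archimedean_if_bounded[OF hom div] by blast
qed

end
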